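(* Let $\Gamma$ be a relational structure with domain $\mathbb{Q}.\mathbb{Z}$ whose relations are first-order definable in $(\mathbb{Q}.\mathbb{Z};\mathrm{suc})$ and which contains $\mathrm{suc}$ among its relations. The following are equivalent: (1) every reduced DNF formula defining a relation of $\Gamma$ over $(\mathbb{Q}.\mathbb{Z};\mathrm{suc})$ is positive; (2) $\Gamma$ has an endomorphism $e$ and elements $a,b$ lying in different copies of $\mathbb{Z}$ such that $e(a),e(b)$ lie in the same copy of $\mathbb{Z}$; (3) $\Gamma$ does not primitive positively define a non-trivial binary relation with infinite distance degree.
   Context: $\mathbb{Q}.\mathbb{Z}=\mathbb{Q}\times\mathbb{Z}$ with lexicographic order; its copies of $\mathbb{Z}$ are the sets $\{a\}\times\mathbb{Z}$; $(a,z)+k=(a,z+k)$. $\mathrm{suc}^p=\{(x,x+p)\}$ for $p\in\mathbb{Z}$ and $\mathrm{suc}=\mathrm{suc}^1$. Relations first-order definable in $(\mathbb{Q}.\mathbb{Z};\mathrm{suc})$ have quantifier-free definitions using literals $\mathrm{suc}^p(x,y)$ and their negations. A DNF formula over such literals is reduced if removing any literal or any disjunct yields a formula not equivalent to it over $(\mathbb{Q}.\mathbb{Z};\mathrm{suc})$, and positive if it contains no negated literals. A binary relation first-order definable in $(\mathbb{Q}.\mathbb{Z};\mathrm{suc})$ is trivial if it is primitive positive definable in $(\mathbb{Q}.\mathbb{Z};\mathrm{suc})$, non-trivial otherwise. Its distance degree is the supremum of $|x-y|$ over pairs $(x,y)$ in the relation with $x,y$ in the same copy of $\mathbb{Z}$;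 it is infinite if this supremum is $\infty$. *)

theory Defs
  imports Main "HOL-Library.Extended_Nat"
begin

type_synonym qz = "rat \<times> int"

text \<open>(a,z) + k = (a, z+k); the copies of Z are the sets {a} x Z.\<close>
definition qz_add :: "qz \<Rightarrow> int \<Rightarrow> qz" where
  "qz_add x k = (fst x, snd x + k)"

definition suc_rel :: "qz list set" where
  "suc_rel = {[x, qz_add x 1] | x. True}"

datatype fo = FSuc nat nat | FEq nat nat | FNeg fo | FConj fo fo | FEx nat fo

fun fo_sat :: "fo \<Rightarrow> (nat \<Rightarrow> qz) \<Rightarrow> bool" where
  "fo_sat (FSuc i j) s = ((s i, s j) \<in> {(x, y). [x, y] \<in> suc_rel})"
| "fo_sat (FEq i j) s = (s i = s j)"
| "fo_sat (FNeg \<phi>) s = (\<not> fo_sat \<phi> s)"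
| "fo_sat (FConj \<phi> \<psi>) s = (fo_sat \<phi> s \<and> fo_sat \<psi> s)"
| "fo_sat (FEx v \<phi>) s = (\<exists>x. fo_sat \<phi> (s(v := x)))"

fun fo_fv :: "fo \<Rightarrow> nat set" where
  "fo_fv (FSuc i j) = {i, j}"
| "fo_fv (FEq i j) = {i, j}"
| "fo_fv (FNeg \<phi>) = fo_fv \<phi>"
| "fo_fv (FConj \<phi> \<psi>) = fo_fv \<phi> \<union> fo_fv \<psi>"
| "fo_fv (FEx v \<phi>) = fo_fv \<phi> - {v}"

definition fo_definable :: "nat \<Rightarrow> qz list set \<Rightarrow> bool" where
  "fo_definable n R \<longleftrightarrow>
     (\<exists>\<phi>. fo_fv \<phi> \<subseteq> {..<n} \<and> R = {t. length t = n \<and> fo_sat \<phi> (\<lambda>i. t ! i)})"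

datatype pp = PAtom "qz list set" "nat list" | PEq nat nat | PConj pp pp | PEx nat pp

fun pp_sat :: "pp \<Rightarrow> (nat \<Rightarrow> qz) \<Rightarrow> bool" where
  "pp_sat (PAtom R vs) s = (map s vs \<in> R)"
| "pp_sat (PEq i j) s = (s i = s j)"
| "pp_sat (PConj \<phi> \<psi>) s = (pp_sat \<phi> s \<and> pp_sat \<psi> s)"
| "pp_sat (PEx v \<phi>) s = (\<exists>x. pp_sat \<phi> (s(v := x)))"

fun pp_fv :: "pp \<Rightarrow> nat set" where
  "pp_fv (PAtom R vs) = set vs"
| "pp_fv (PEq i j) = {i, j}"
| "pp_fv (PConj \<phi> \<psi>) = pp_fv \<phi> \<union> pp_fv \<psi>"
| "pp_fv (PEx v \<phi>) = pp_fv \<phi> - {v}"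

fun pp_atoms :: "pp \<Rightarrow> qz list set set" where
  "pp_atoms (PAtom R vs) = {R}"
| "pp_atoms (PEq i j) = {}"
| "pp_atoms (PConj \<phi> \<psi>) = pp_atoms \<phi> \<union> pp_atoms \<psi>"
| "pp_atoms (PEx v \<phi>) = pp_atoms \<phi>"

definition pp_definable :: "qz list set set \<Rightarrow> nat \<Rightarrow> qz list set \<Rightarrow> bool" where
  "pp_definable A n R \<longleftrightarrow>
     (\<exists>\<phi>. pp_atoms \<phi> \<subseteq> A \<and> pp_fv \<phi> \<subseteq> {..<n}
          \<and> R = {t. length t = n \<and> pp_sat \<phi> (\<lambda>i. t ! i)})"

type_synonym qz_structure = "(nat \<times> qz list set) set"

definition wf_structure :: "qz_structure \<Rightarrow> bool" where
  "wf_structure \<Gamma> \<longleftrightarrow> (\<forall>(n, R) \<in> \<Gamma>. R \<subseteq> {t. length t = n})"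

definition fo_definable_structure :: "qz_structure \<Rightarrow> bool" where
  "fo_definable_structure \<Gamma> \<longleftrightarrow> (\<forall>(n, R) \<in> \<Gamma>. fo_definable n R)"

definition endomorphism :: "qz_structure \<Rightarrow> (qz \<Rightarrow> qz) \<Rightarrow> bool" where
  "endomorphism \<Gamma> e \<longleftrightarrow> (\<forall>(n, R) \<in> \<Gamma>. \<forall>t \<in> R. map e t \<in> R)"

definition nontrivial_binary :: "qz list set \<Rightarrow> bool" where
  "nontrivial_binary S \<longleftrightarrow> fo_definable 2 S \<and> \<not> pp_definable {suc_rel} 2 S"

definition distance_degree :: "qz list set \<Rightarrow> enat" where
  "distance_degree S =
     (SUP t \<in> {t \<in> S. fst (t ! 0) = fst (t ! 1)}. enat (nat \<bar>snd (t ! 1) - snd (t ! 0)\<bar>))"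

text \<open>A literal (b, p, i, j): if b then suc^p(x_i,x_j) else its negation.
  A DNF formula is a list of disjuncts, each a list of literals.\<close>
type_synonym lit = "bool \<times> int \<times> nat \<times> nat"
type_synonym dnf = "lit list list"

fun lit_sat :: "lit \<Rightarrow> (nat \<Rightarrow> qz) \<Rightarrow> bool" where
  "lit_sat (b, p, i, j) s = (b \<longleftrightarrow> s j = qz_add (s i) p)"

definition dnf_sat :: "dnf \<Rightarrow> (nat \<Rightarrow> qz) \<Rightarrow> bool" where
  "dnf_sat D s \<longleftrightarrow> (\<exists>c \<in> set D. \<forall>l \<in> set c. lit_sat l s)"

definition dnf_equiv :: "dnf \<Rightarrow> dnf \<Rightarrow> bool" where
  "dnf_equiv D D' \<longleftrightarrow> (\<forall>s. dnf_sat D s = dnf_sat D' s)"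

definition dnf_defines :: "nat \<Rightarrow> dnf \<Rightarrow> qz list set \<Rightarrow> bool" where
  "dnf_defines n D R \<longleftrightarrow>
     (\<forall>c \<in> set D. \<forall>(b, p, i, j) \<in> set c. i < n \<and> j < n)
     \<and> R = {t. length t = n \<and> dnf_sat D (\<lambda>i. t ! i)}"

definition reduced_dnf :: "dnf \<Rightarrow> bool" where
  "reduced_dnf D \<longleftrightarrow>
     (\<forall>i < length D. \<not> dnf_equiv D (take i D @ drop (Suc i) D))
     \<and> (\<forall>i < length D. \<forall>j < length (D ! i).
          \<not> dnf_equiv D (D[i := take j (D ! i) @ drop (Suc j) (D ! i)]))"

definition positive_dnf :: "dnf \<Rightarrow> bool" where
  "positive_dnf D \<longleftrightarrow> (\<forall>c \<in> set D. \<forall>l \<in> set c. fst l)"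

end

theory Submission
  imports Defs
begin

text \<open>
  Quantifier elimination gives every relation first-order definable in \<open>(\<rat>.\<int>; suc)\<close> a
  DNF definition over literals \<open>suc\<^sup>p(x, y)\<close> and their negations.

  (1) \<open>\<Rightarrow>\<close> (2): positive literals survive collapsing all of \<open>\<rat>.\<int>\<close> onto one copy of \<open>\<int>\<close>,
  so this collapse is an endomorphism.

  (2) \<open>\<Rightarrow>\<close> (3): the literals of a DNF for a binary relation \<open>S\<close> have bounded offsets, so if
  \<open>S\<close> contains pairs inside one copy at arbitrarily large distance, it contains every pair
  from two different copies. An endomorphism merging two copies maps such pairs onto pairs
  inside one copy at any prescribed distance, so a pp-definable \<open>S\<close> would contain all pairs
  and be trivial.

  (3) \<open>\<Rightarrow>\<close> (1): reducedness of a DNF for \<open>R\<close> with a negative literal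
  \<open>\<not> suc\<^sup>p(x\<^sub>i, x\<^sub>j)\<close> provides an assignment violating \<open>R\<close> only through that literal. Splitting
  its variables into the component \<open>I\<close> of \<open>x\<^sub>i\<close> under the positive literals of the disjunct
  and the rest, and placing the two blocks at independent points \<open>x\<close>, \<open>y\<close>, gives a
  pp-definable relation \<open>S(x, y)\<close> containing all pairs from different copies and
  \<open>(x, x + p + \<Delta>)\<close> for all large \<open>\<Delta>\<close>, but not \<open>(x, x + p)\<close>.
\<close>

lemma qz_add_0 [simp]: "qz_add x 0 = x"
  by (simp add: qz_add_def)

lemma qz_add_assoc [simp]: "qz_add (qz_add x a) b = qz_add x (a + b)"
  by (simp add: qz_add_def)

lemma fst_qz_add [simp]: "fst (qz_add x a) = fst x"
  by (simp add: qz_add_def)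

lemma snd_qz_add [simp]: "snd (qz_add x a) = snd x + a"
  by (simp add: qz_add_def)

lemma eq_qz_add_iff: "y = qz_add x c \<longleftrightarrow> fst y = fst x \<and> snd y = snd x + c"
  by (auto simp: qz_add_def prod_eq_iff)

lemma qz_add_cancel [simp]: "qz_add x a = qz_add x b \<longleftrightarrow> a = b"
  by (auto simp: qz_add_def)

lemma eq_qz_add_self_iff [simp]: "x = qz_add x a \<longleftrightarrow> a = 0"
  by (auto simp: eq_qz_add_iff)

lemma eq_qz_add_swap: "y = qz_add x c \<longleftrightarrow> x = qz_add y (- c)"
  by (auto simp: eq_qz_add_iff)

lemma suc_rel_iff [simp]: "[x, y] \<in> suc_rel \<longleftrightarrow> y = qz_add x 1"
  unfolding suc_rel_def by blast

lemma infinite_UNIV_qz: "infinite (UNIV :: qz set)"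
  by (simp add: finite_prod infinite_UNIV_char_0)

fun lit_vars :: "lit \<Rightarrow> nat set" where
  "lit_vars (b, p, i, j) = {i, j}"

definition dnf_vars :: "dnf \<Rightarrow> nat set" where
  "dnf_vars D = (\<Union>c\<in>set D. \<Union>l\<in>set c. lit_vars l)"

lemma dnf_defines_iff:
  "dnf_defines n D R \<longleftrightarrow> dnf_vars D \<subseteq> {..<n} \<and> R = {t. length t = n \<and> dnf_sat D (\<lambda>i. t ! i)}"
  by (fastforce simp: dnf_defines_def dnf_vars_def)

lemma lit_vars_subset_dnf_vars: "c \<in> set D \<Longrightarrow> l \<in> set c \<Longrightarrow> lit_vars l \<subseteq> dnf_vars D"
  unfolding dnf_vars_def by blast

lemma finite_dnf_vars: "finite (dnf_vars D)"
proof -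
  have "finite (lit_vars l)" for l
    by (cases l) simp
  then show ?thesis
    by (simp add: dnf_vars_def)
qed

lemma dnf_sat_Nil [simp]: "\<not> dnf_sat [] s"
  by (simp add: dnf_sat_def)

lemma dnf_sat_Cons: "dnf_sat (c # D) s \<longleftrightarrow> (\<forall>l\<in>set c. lit_sat l s) \<or> dnf_sat D s"
  by (simp add: dnf_sat_def)

lemma dnf_sat_singleton: "dnf_sat [c] s \<longleftrightarrow> (\<forall>l\<in>set c. lit_sat l s)"
  by (simp add: dnf_sat_def)

lemma dnf_vars_Nil [simp]: "dnf_vars [] = {}"
  by (simp add: dnf_vars_def)

lemma dnf_vars_singleton: "dnf_vars [c] = (\<Union>l\<in>set c. lit_vars l)"
  by (simp add: dnf_vars_def)

lemma dnf_vars_Cons: "dnf_vars (c # D) = dnf_vars [c] \<union> dnf_vars D"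
  by (simp add: dnf_vars_def)

lemma dnf_sat_cong_lit:
  "(\<And>c l. c \<in> set D \<Longrightarrow> l \<in> set c \<Longrightarrow> lit_sat l s = lit_sat l s') \<Longrightarrow> dnf_sat D s = dnf_sat D s'"
  unfolding dnf_sat_def by (intro bex_cong ball_cong refl) blast

lemma lit_sat_cong: "(\<And>x. x \<in> lit_vars l \<Longrightarrow> s x = s' x) \<Longrightarrow> lit_sat l s = lit_sat l s'"
  by (cases l) auto

lemma dnf_sat_cong: "(\<And>x. x \<in> dnf_vars D \<Longrightarrow> s x = s' x) \<Longrightarrow> dnf_sat D s = dnf_sat D s'"
  by (rule dnf_sat_cong_lit, rule lit_sat_cong) (auto simp: dnf_vars_def)

lemma dnf_offset_bound: "\<exists>M. \<forall>c\<in>set D. \<forall>(b, q, k, m)\<in>set c. \<bar>q\<bar> \<le> (M :: int)"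
proof -
  let ?A = "(\<lambda>l. \<bar>fst (snd l)\<bar>) ` (\<Union>c\<in>set D. set c)"
  have "\<bar>q\<bar> \<le> Max ?A" if "c \<in> set D" "(b, q, k, m) \<in> set c" for c b q k m
    using that by (intro Max_ge) force+
  then show ?thesis
    by blast
qed

lemma dnf_defines_map_mem_iff: "dnf_defines n D R \<Longrightarrow> map f [0..<n] \<in> R \<longleftrightarrow> dnf_sat D f"
  unfolding dnf_defines_iff by (auto intro!: dnf_sat_cong)

section \<open>Quantifier elimination\<close>

fun lit_neg :: "lit \<Rightarrow> lit" where
  "lit_neg (b, p, i, j) = (\<not> b, p, i, j)"

lemma lit_sat_lit_neg [simp]: "lit_sat (lit_neg l) s \<longleftrightarrow> \<not> lit_sat l s"
  by (cases l) auto

lemma lit_vars_lit_neg [simp]: "lit_vars (lit_neg l) = lit_vars l"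
  by (cases l) auto

definition dnf_and :: "dnf \<Rightarrow> dnf \<Rightarrow> dnf" where
  "dnf_and D1 D2 = concat (map (\<lambda>c1. map (\<lambda>c2. c1 @ c2) D2) D1)"

lemma dnf_sat_dnf_and [simp]: "dnf_sat (dnf_and D1 D2) s \<longleftrightarrow> dnf_sat D1 s \<and> dnf_sat D2 s"
  by (auto simp: dnf_and_def dnf_sat_def)

lemma dnf_vars_dnf_and: "dnf_vars (dnf_and D1 D2) \<subseteq> dnf_vars D1 \<union> dnf_vars D2"
  by (auto simp: dnf_and_def dnf_vars_def)

definition dnf_neg :: "dnf \<Rightarrow> dnf" where
  "dnf_neg D = foldr (\<lambda>c acc. dnf_and (map (\<lambda>l. [lit_neg l]) c) acc) D [[]]"

lemma dnf_sat_dnf_neg [simp]: "dnf_sat (dnf_neg D) s \<longleftrightarrow> \<not> dnf_sat D s"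
proof (induction D)
  case Nil
  then show ?case
    by (simp add: dnf_neg_def dnf_sat_def)
next
  case (Cons c D)
  have "dnf_sat (map (\<lambda>l. [lit_neg l]) c) s \<longleftrightarrow> (\<exists>l\<in>set c. \<not> lit_sat l s)"
    by (auto simp: dnf_sat_def)
  with Cons show ?case
    by (simp add: dnf_neg_def dnf_sat_Cons)
qed

lemma dnf_vars_dnf_neg: "dnf_vars (dnf_neg D) \<subseteq> dnf_vars D"
proof (induction D)
  case Nil
  then show ?case
    by (simp add: dnf_neg_def dnf_vars_def)
next
  case (Cons c D)
  have "dnf_vars (map (\<lambda>l. [lit_neg l]) c) = dnf_vars [c]"
    by (auto simp: dnf_vars_def)
  then have "dnf_vars (dnf_neg (c # D)) \<subseteq> dnf_vars [c] \<union> dnf_vars (dnf_neg D)"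
    using dnf_vars_dnf_and[of "map (\<lambda>l. [lit_neg l]) c" "dnf_neg D"] by (simp add: dnf_neg_def)
  then show ?case
    using Cons.IH dnf_vars_Cons[of c D] by blast
qed

text \<open>A literal between \<open>v\<close> and
  itself has a fixed truth value; a positive literal linking \<open>v\<close> to another variable
  determines \<open>v\<close> and is used to substitute it away; if there is none, every
  remaining literal on \<open>v\<close> is negative and excludes a single value of \<open>v\<close>, so
  since \<open>\<rat>.\<int>\<close> is infinite these literals can simply be dropped.\<close>

fun is_loop :: "nat \<Rightarrow> lit \<Rightarrow> bool" where
  "is_loop v (b, p, i, j) \<longleftrightarrow> i = v \<and> j = v"

fun loop_value :: "lit \<Rightarrow> bool" where
  "loop_value (b, p, i, j) \<longleftrightarrow> (b \<longleftrightarrow> p = 0)"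

fun is_link :: "nat \<Rightarrow> lit \<Rightarrow> bool" where
  "is_link v (b, p, i, j) \<longleftrightarrow> b \<and> (i = v \<or> j = v) \<and> \<not> (i = v \<and> j = v)"

fun link_var :: "nat \<Rightarrow> lit \<Rightarrow> nat" where
  "link_var v (b, p, i, j) = (if i = v then j else i)"

fun link_offset :: "nat \<Rightarrow> lit \<Rightarrow> int" where
  "link_offset v (b, p, i, j) = (if i = v then - p else p)"

fun lit_subst :: "nat \<Rightarrow> nat \<Rightarrow> int \<Rightarrow> lit \<Rightarrow> lit" where
  "lit_subst v w c (b, q, i, j) =
     (if i = v \<and> j \<noteq> v then (b, c + q, w, j)
      else if j = v \<and> i \<noteq> v then (b, q - c, i, w) else (b, q, i, j))"

definition clause_elim :: "nat \<Rightarrow> lit list \<Rightarrow> dnf" where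
  "clause_elim v c =
     (if \<exists>l\<in>set c. is_loop v l \<and> \<not> loop_value l then [] else
      let c0 = filter (\<lambda>l. \<not> is_loop v l) c in
      case find (is_link v) c0 of
        Some l \<Rightarrow> [map (lit_subst v (link_var v l) (link_offset v l)) c0]
      | None \<Rightarrow> [filter (\<lambda>l. v \<notin> lit_vars l) c0])"

lemma find_Some_mem: "find P xs = Some x \<Longrightarrow> x \<in> set xs \<and> P x"
  by (induction xs) (auto split: if_splits)

lemma lit_sat_loop: "is_loop v l \<Longrightarrow> lit_sat l s \<longleftrightarrow> loop_value l"
  by (cases l) auto

lemma lit_sat_link: "is_link v l \<Longrightarrow> lit_sat l s \<longleftrightarrow> s v = qz_add (s (link_var v l)) (link_offset v l)"
  by (cases l) (auto simp: eq_qz_add_iff)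

lemma link_var_neq: "is_link v l \<Longrightarrow> link_var v l \<noteq> v"
  by (cases l) auto

lemma link_var_mem: "is_link v l \<Longrightarrow> link_var v l \<in> lit_vars l"
  by (cases l) auto

lemma lit_sat_lit_subst:
  "\<not> is_loop v l \<Longrightarrow> s v = qz_add (s w) c \<Longrightarrow> lit_sat (lit_subst v w c l) s \<longleftrightarrow> lit_sat l s"
  by (cases l) (auto simp: eq_qz_add_iff)

lemma lit_vars_lit_subst: "lit_vars (lit_subst v w c l) \<subseteq> lit_vars l \<union> {w}"
  by (cases l) auto

lemma lit_vars_lit_subst_notin: "\<not> is_loop v l \<Longrightarrow> w \<noteq> v \<Longrightarrow> v \<notin> lit_vars (lit_subst v w c l)"
  by (cases l) auto

lemma lit_sat_fun_upd: "v \<notin> lit_vars l \<Longrightarrow> lit_sat l (s(v := x)) \<longleftrightarrow> lit_sat l s"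
  by (rule lit_sat_cong) auto

lemma lit_sat_excludes_one_value:
  assumes "\<not> is_link v l" "\<not> is_loop v l" "v \<in> lit_vars l"
  shows "\<exists>y. \<forall>x. x \<noteq> y \<longrightarrow> lit_sat l (s(v := x))"
proof (cases l)
  case (fields b p i j)
  with assms have "\<not> b" "i = v \<and> j \<noteq> v \<or> j = v \<and> i \<noteq> v"
    by auto
  then show ?thesis
  proof (elim disjE conjE)
    assume "i = v" "j \<noteq> v"
    with \<open>\<not> b\<close> fields show ?thesis
      by (intro exI[of _ "qz_add (s j) (- p)"]) (auto simp: eq_qz_add_swap[of "s j"])
  next
    assume "j = v" "i \<noteq> v"
    with \<open>\<not> b\<close> fields show ?thesis
      by (intro exI[of _ "qz_add (s i) p"]) auto
  qed
qed

lemma exists_sat_via_link: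
  assumes "l0 \<in> set c" "is_link v l0" "\<forall>l\<in>set c. \<not> is_loop v l"
  shows "(\<exists>x. \<forall>l\<in>set c. lit_sat l (s(v := x)))
     \<longleftrightarrow> (\<forall>l\<in>set c. lit_sat (lit_subst v (link_var v l0) (link_offset v l0) l) s)"
    (is "_ \<longleftrightarrow> (\<forall>l\<in>set c. lit_sat (?subst l) s)")
proof -
  let ?w = "link_var v l0" and ?c = "link_offset v l0"
  have "?w \<noteq> v"
    using assms(2) by (rule link_var_neq)
  then have subst_upd: "lit_sat (?subst l) (s(v := x)) \<longleftrightarrow> lit_sat (?subst l) s" if "l \<in> set c" for l x
    using that assms(3) by (intro lit_sat_fun_upd lit_vars_lit_subst_notin) auto
  have subst: "lit_sat (?subst l) (s(v := x)) \<longleftrightarrow> lit_sat l (s(v := x))"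
    if "l \<in> set c" "x = qz_add (s ?w) ?c" for l x
    using that assms(3) \<open>?w \<noteq> v\<close> by (intro lit_sat_lit_subst) auto
  show ?thesis
  proof
    assume "\<exists>x. \<forall>l\<in>set c. lit_sat l (s(v := x))"
    then obtain x where x: "\<forall>l\<in>set c. lit_sat l (s(v := x))"
      by blast
    then have "x = qz_add (s ?w) ?c"
      using assms(1,2) lit_sat_link[of v l0 "s(v := x)"] \<open>?w \<noteq> v\<close> by auto
    with x subst subst_upd show "\<forall>l\<in>set c. lit_sat (?subst l) s"
      by blast
  next
    assume "\<forall>l\<in>set c. lit_sat (?subst l) s"
    with subst subst_upd show "\<exists>x. \<forall>l\<in>set c. lit_sat l (s(v := x))"
      by blast
  qed
qed

lemma exists_sat_without_link:
  assumes "\<forall>l\<in>set c. \<not> is_link v l \<and> \<not> is_loop v l"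
  shows "(\<exists>x. \<forall>l\<in>set c. lit_sat l (s(v := x))) \<longleftrightarrow> (\<forall>l\<in>set c. v \<notin> lit_vars l \<longrightarrow> lit_sat l s)"
proof
  assume "\<exists>x. \<forall>l\<in>set c. lit_sat l (s(v := x))"
  then show "\<forall>l\<in>set c. v \<notin> lit_vars l \<longrightarrow> lit_sat l s"
    by (metis lit_sat_fun_upd)
next
  assume free: "\<forall>l\<in>set c. v \<notin> lit_vars l \<longrightarrow> lit_sat l s"
  have "\<forall>l\<in>set c. \<exists>y. v \<in> lit_vars l \<longrightarrow> (\<forall>x. x \<noteq> y \<longrightarrow> lit_sat l (s(v := x)))"
  proof
    fix l
    assume "l \<in> set c"
    with assms lit_sat_excludes_one_value[of v l s]
    show "\<exists>y. v \<in> lit_vars l \<longrightarrow> (\<forall>x. x \<noteq> y \<longrightarrow> lit_sat l (s(v := x)))"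
      by blast
  qed
  then obtain y where y: "\<forall>l\<in>set c. v \<in> lit_vars l \<longrightarrow> (\<forall>x. x \<noteq> y l \<longrightarrow> lit_sat l (s(v := x)))"
    by (rule bchoice[THEN exE])
  obtain x where x: "x \<notin> y ` set c"
    using ex_new_if_finite[OF infinite_UNIV_qz, of "y ` set c"] by auto
  have "lit_sat l (s(v := x))" if "l \<in> set c" for l
  proof (cases "v \<in> lit_vars l")
    case True
    with that x y show ?thesis
      by blast
  next
    case False
    with that free show ?thesis
      by (simp add: lit_sat_fun_upd)
  qed
  then show "\<exists>x. \<forall>l\<in>set c. lit_sat l (s(v := x))"
    by blast
qed

lemma dnf_sat_clause_elim: "dnf_sat (clause_elim v c) s \<longleftrightarrow> (\<exists>x. \<forall>l\<in>set c. lit_sat l (s(v := x)))"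
proof (cases "\<exists>l\<in>set c. is_loop v l \<and> \<not> loop_value l")
  case True
  then have "\<not> (\<forall>l\<in>set c. lit_sat l (s(v := x)))" for x
    using lit_sat_loop by blast
  with True show ?thesis
    by (simp add: clause_elim_def)
next
  case False
  define c0 where "c0 = filter (\<lambda>l. \<not> is_loop v l) c"
  have "(\<forall>l\<in>set c. lit_sat l t) \<longleftrightarrow> (\<forall>l\<in>set c0. lit_sat l t)" for t
  proof -
    have "\<forall>l\<in>set c. is_loop v l \<longrightarrow> lit_sat l t"
      using False lit_sat_loop by blast
    then show ?thesis
      unfolding c0_def set_filter by blast
  qed
  then have c0: "(\<exists>x. \<forall>l\<in>set c. lit_sat l (s(v := x))) \<longleftrightarrow> (\<exists>x. \<forall>l\<in>set c0. lit_sat l (s(v := x)))"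
    by blast
  have no_loop: "\<forall>l\<in>set c0. \<not> is_loop v l"
    by (simp add: c0_def)
  show ?thesis
  proof (cases "find (is_link v) c0")
    case (Some l0)
    then have "l0 \<in> set c0" "is_link v l0"
      by (auto dest: find_Some_mem)
    have elim: "clause_elim v c = [map (lit_subst v (link_var v l0) (link_offset v l0)) c0]"
      unfolding clause_elim_def Let_def if_not_P[OF False] c0_def[symmetric] Some by simp
    show ?thesis
      unfolding elim c0 exists_sat_via_link[OF \<open>l0 \<in> set c0\<close> \<open>is_link v l0\<close> no_loop]
        dnf_sat_singleton set_map by blast
  next
    case None
    then have no_link: "\<forall>l\<in>set c0. \<not> is_link v l \<and> \<not> is_loop v l"
      using no_loop unfolding find_None_iff by blast
    have elim: "clause_elim v c = [filter (\<lambda>l. v \<notin> lit_vars l) c0]"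
      unfolding clause_elim_def Let_def if_not_P[OF False] c0_def[symmetric] None by simp
    show ?thesis
      unfolding elim c0 exists_sat_without_link[OF no_link] dnf_sat_singleton set_filter by blast
  qed
qed

lemma dnf_vars_clause_elim: "dnf_vars (clause_elim v c) \<subseteq> dnf_vars [c] - {v}"
proof -
  let ?c0 = "filter (\<lambda>l. \<not> is_loop v l) c"
  have vars_c: "lit_vars l \<subseteq> dnf_vars [c]" if "l \<in> set c" for l
    using that by (auto simp: dnf_vars_def)
  have subst: "lit_vars (lit_subst v (link_var v l0) (link_offset v l0) l) \<subseteq> dnf_vars [c] - {v}"
    if "find (is_link v) ?c0 = Some l0" "l \<in> set ?c0" for l0 l
  proof -
    from that(1) have "l0 \<in> set c" "is_link v l0"
      by (auto dest: find_Some_mem)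
    then have "link_var v l0 \<in> dnf_vars [c] - {v}"
      using vars_c link_var_mem link_var_neq by blast
    moreover have "lit_vars l \<subseteq> dnf_vars [c]" "\<not> is_loop v l"
      using that(2) vars_c by auto
    ultimately show ?thesis
      using lit_vars_lit_subst[of v "link_var v l0" "link_offset v l0" l]
        lit_vars_lit_subst_notin[of v l "link_var v l0" "link_offset v l0"] by blast
  qed
  have drop: "lit_vars l \<subseteq> dnf_vars [c] - {v}" if "l \<in> set c" "v \<notin> lit_vars l" for l
    using that vars_c[of l] by auto
  show ?thesis
  proof (cases "find (is_link v) ?c0")
    case None
    have sub: "dnf_vars [filter (\<lambda>l. v \<notin> lit_vars l) ?c0] \<subseteq> dnf_vars [c] - {v}"
      unfolding dnf_vars_singleton[of "filter _ _"] by (intro UN_least) (simp add: drop)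
    from None have "clause_elim v c = [] \<or> clause_elim v c = [filter (\<lambda>l. v \<notin> lit_vars l) ?c0]"
      by (simp add: clause_elim_def)
    then show ?thesis
      by (elim disjE) (simp_all only: dnf_vars_Nil empty_subsetI sub)
  next
    case (Some l0)
    have sub: "dnf_vars [map (lit_subst v (link_var v l0) (link_offset v l0)) ?c0] \<subseteq> dnf_vars [c] - {v}"
      unfolding dnf_vars_singleton[of "map _ _"] set_map image_image
      by (intro UN_least) (simp add: subst[OF Some])
    from Some have "clause_elim v c = [] \<or>
        clause_elim v c = [map (lit_subst v (link_var v l0) (link_offset v l0)) ?c0]"
      by (simp add: clause_elim_def)
    then show ?thesis
      by (elim disjE) (simp_all only: dnf_vars_Nil empty_subsetI sub)
  qed
qed

fun dnf_of_fo :: "fo \<Rightarrow> dnf" where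
  "dnf_of_fo (FSuc i j) = [[(True, 1, i, j)]]"
| "dnf_of_fo (FEq i j) = [[(True, 0, i, j)]]"
| "dnf_of_fo (FNeg \<phi>) = dnf_neg (dnf_of_fo \<phi>)"
| "dnf_of_fo (FConj \<phi> \<psi>) = dnf_and (dnf_of_fo \<phi>) (dnf_of_fo \<psi>)"
| "dnf_of_fo (FEx v \<phi>) = concat (map (clause_elim v) (dnf_of_fo \<phi>))"

lemma dnf_sat_dnf_of_fo: "dnf_sat (dnf_of_fo \<phi>) s \<longleftrightarrow> fo_sat \<phi> s"
proof (induction \<phi> arbitrary: s)
  case (FEx v \<phi>)
  have "dnf_sat (dnf_of_fo (FEx v \<phi>)) s \<longleftrightarrow> (\<exists>c\<in>set (dnf_of_fo \<phi>). dnf_sat (clause_elim v c) s)"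
    by (auto simp: dnf_sat_def)
  also have "\<dots> \<longleftrightarrow> (\<exists>x. dnf_sat (dnf_of_fo \<phi>) (s(v := x)))"
    unfolding dnf_sat_clause_elim by (auto simp: dnf_sat_def simp del: lit_sat.simps)
  finally show ?case
    using FEx.IH by (simp only: fo_sat.simps)
qed (auto simp: dnf_sat_singleton)

lemma dnf_vars_dnf_of_fo: "dnf_vars (dnf_of_fo \<phi>) \<subseteq> fo_fv \<phi>"
proof (induction \<phi>)
  case (FNeg \<phi>)
  then show ?case
    using dnf_vars_dnf_neg by fastforce
next
  case (FConj \<phi> \<psi>)
  then show ?case
    using dnf_vars_dnf_and by fastforce
next
  case (FEx v \<phi>)
  have "dnf_vars (dnf_of_fo (FEx v \<phi>)) = (\<Union>c\<in>set (dnf_of_fo \<phi>). dnf_vars (clause_elim v c))"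
    by (auto simp: dnf_vars_def)
  also have "\<dots> \<subseteq> dnf_vars (dnf_of_fo \<phi>) - {v}"
    using dnf_vars_clause_elim by (fastforce simp: dnf_vars_def)
  finally show ?case
    using FEx.IH by auto
qed (auto simp: dnf_vars_def)

lemma fo_definable_imp_dnf_defines: "fo_definable n R \<Longrightarrow> \<exists>D. dnf_defines n D R"
  unfolding fo_definable_def dnf_defines_iff
  using dnf_vars_dnf_of_fo dnf_sat_dnf_of_fo by blast

fun pp_suc_chain :: "nat \<Rightarrow> nat \<Rightarrow> nat \<Rightarrow> nat \<Rightarrow> pp" where
  "pp_suc_chain a b 0 v = PEq a b"
| "pp_suc_chain a b (Suc k) v = PEx v (PConj (PAtom suc_rel [a, v]) (pp_suc_chain v b k (Suc v)))"

lemma pp_sat_pp_suc_chain: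
  "a < v \<Longrightarrow> b < v \<Longrightarrow> pp_sat (pp_suc_chain a b k v) s \<longleftrightarrow> s b = qz_add (s a) (int k)"
proof (induction k arbitrary: a v s)
  case 0
  then show ?case
    by auto
next
  case (Suc k)
  then have "pp_sat (pp_suc_chain v b k (Suc v)) (s(v := x)) \<longleftrightarrow> s b = qz_add x (int k)" for x
    using Suc.IH[of v "Suc v" "s(v := x)"] by simp
  with Suc.prems show ?case
    by (simp add: add.commute)
qed

lemma pp_fv_pp_suc_chain: "a < v \<Longrightarrow> b < v \<Longrightarrow> pp_fv (pp_suc_chain a b k v) \<subseteq> {a, b}"
proof (induction k arbitrary: a v)
  case (Suc k)
  then have "pp_fv (pp_suc_chain v b k (Suc v)) \<subseteq> {v, b}"
    by simp
  with Suc.prems show ?case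
    by auto
qed simp

lemma pp_atoms_pp_suc_chain: "pp_atoms (pp_suc_chain a b k v) \<subseteq> {suc_rel}"
  by (induction k arbitrary: a v) auto

definition pp_offset :: "nat \<Rightarrow> nat \<Rightarrow> int \<Rightarrow> nat \<Rightarrow> pp" where
  "pp_offset a b c v = (if c \<ge> 0 then pp_suc_chain a b (nat c) v else pp_suc_chain b a (nat (- c)) v)"

lemma pp_sat_pp_offset: "a < v \<Longrightarrow> b < v \<Longrightarrow> pp_sat (pp_offset a b c v) s \<longleftrightarrow> s b = qz_add (s a) c"
  by (auto simp: pp_offset_def pp_sat_pp_suc_chain eq_qz_add_swap[of "s a"])

lemma pp_fv_pp_offset: "a < v \<Longrightarrow> b < v \<Longrightarrow> pp_fv (pp_offset a b c v) \<subseteq> {a, b}"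
  using pp_fv_pp_suc_chain[of a v b] pp_fv_pp_suc_chain[of b v a] by (auto simp: pp_offset_def)

lemma pp_atoms_pp_offset: "pp_atoms (pp_offset a b c v) \<subseteq> {suc_rel}"
  using pp_atoms_pp_suc_chain by (simp add: pp_offset_def)

fun pp_to_fo :: "pp \<Rightarrow> fo" where
  "pp_to_fo (PAtom R vs) = (case vs of [a, b] \<Rightarrow> FSuc a b | _ \<Rightarrow> FEx 0 (FNeg (FEq 0 0)))"
| "pp_to_fo (PEq i j) = FEq i j"
| "pp_to_fo (PConj \<phi> \<psi>) = FConj (pp_to_fo \<phi>) (pp_to_fo \<psi>)"
| "pp_to_fo (PEx v \<phi>) = FEx v (pp_to_fo \<phi>)"

lemma fo_sat_pp_to_fo: "pp_atoms \<phi> \<subseteq> {suc_rel} \<Longrightarrow> fo_sat (pp_to_fo \<phi>) s \<longleftrightarrow> pp_sat \<phi> s"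
  by (induction \<phi> arbitrary: s) (auto simp: suc_rel_def split: list.splits)

lemma fo_fv_pp_to_fo: "fo_fv (pp_to_fo \<phi>) \<subseteq> pp_fv \<phi>"
  by (induction \<phi>) (auto split: list.splits)

fun lit_fo :: "lit \<Rightarrow> nat \<Rightarrow> fo" where
  "lit_fo (b, p, i, j) v =
     (let \<phi> = pp_to_fo (pp_offset i j p v) in if b then \<phi> else FNeg \<phi>)"

definition fo_true :: fo where
  "fo_true = FEx 0 (FEq 0 0)"

definition fo_disj :: "fo \<Rightarrow> fo \<Rightarrow> fo" where
  "fo_disj \<phi> \<psi> = FNeg (FConj (FNeg \<phi>) (FNeg \<psi>))"

definition clause_fo :: "lit list \<Rightarrow> nat \<Rightarrow> fo" where
  "clause_fo c v = foldr (\<lambda>l \<phi>. FConj (lit_fo l v) \<phi>) c fo_true"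

definition dnf_fo :: "dnf \<Rightarrow> nat \<Rightarrow> fo" where
  "dnf_fo D v = foldr (\<lambda>c \<phi>. fo_disj (clause_fo c v) \<phi>) D (FNeg fo_true)"

lemma fo_sat_lit_fo: "lit_vars l \<subseteq> {..<v} \<Longrightarrow> fo_sat (lit_fo l v) s \<longleftrightarrow> lit_sat l s"
  by (cases l) (simp add: Let_def fo_sat_pp_to_fo pp_atoms_pp_offset pp_sat_pp_offset)

lemma fo_fv_lit_fo:
  assumes "lit_vars l \<subseteq> {..<v}"
  shows "fo_fv (lit_fo l v) \<subseteq> lit_vars l"
proof (cases l)
  case (fields b p i j)
  with assms fo_fv_pp_to_fo[of "pp_offset i j p v"] pp_fv_pp_offset[of i v j p] show ?thesis
    by (auto simp: Let_def)
qed

lemma fo_sat_clause_fo: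
  "dnf_vars [c] \<subseteq> {..<v} \<Longrightarrow> fo_sat (clause_fo c v) s \<longleftrightarrow> (\<forall>l\<in>set c. lit_sat l s)"
proof (induction c)
  case (Cons l c)
  then have "lit_vars l \<subseteq> {..<v}" "dnf_vars [c] \<subseteq> {..<v}"
    by (auto simp: dnf_vars_singleton)
  with Cons.IH show ?case
    by (simp add: clause_fo_def fo_sat_lit_fo del: lit_sat.simps)
qed (simp add: clause_fo_def fo_true_def)

lemma fo_fv_clause_fo: "dnf_vars [c] \<subseteq> {..<v} \<Longrightarrow> fo_fv (clause_fo c v) \<subseteq> dnf_vars [c]"
proof (induction c)
  case (Cons l c)
  then have "lit_vars l \<subseteq> {..<v}" "dnf_vars [c] \<subseteq> {..<v}"
    by (auto simp: dnf_vars_singleton)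
  with Cons.IH fo_fv_lit_fo[of l v] show ?case
    by (auto simp: clause_fo_def dnf_vars_singleton simp del: lit_vars.simps)
qed (simp add: clause_fo_def fo_true_def)

lemma fo_sat_dnf_fo: "dnf_vars D \<subseteq> {..<v} \<Longrightarrow> fo_sat (dnf_fo D v) s \<longleftrightarrow> dnf_sat D s"
proof (induction D)
  case (Cons c D)
  then have "dnf_vars [c] \<subseteq> {..<v}" "dnf_vars D \<subseteq> {..<v}"
    by (auto simp: dnf_vars_def)
  with Cons.IH show ?case
    by (simp add: dnf_fo_def fo_disj_def dnf_sat_Cons fo_sat_clause_fo del: lit_sat.simps)
qed (simp add: dnf_fo_def fo_true_def)

lemma fo_fv_dnf_fo: "dnf_vars D \<subseteq> {..<v} \<Longrightarrow> fo_fv (dnf_fo D v) \<subseteq> dnf_vars D"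
proof (induction D)
  case (Cons c D)
  then show ?case
    using fo_fv_clause_fo[of c v] dnf_vars_Cons[of c D] by (auto simp: dnf_fo_def fo_disj_def)
qed (simp add: dnf_fo_def fo_true_def)

lemma fo_definable_dnf:
  "dnf_vars D \<subseteq> {..<n} \<Longrightarrow> fo_definable n {t. length t = n \<and> dnf_sat D (\<lambda>i. t ! i)}"
  unfolding fo_definable_def
  using fo_sat_dnf_fo fo_fv_dnf_fo by (intro exI[of _ "dnf_fo D n"]) blast

lemma pp_sat_cong: "(\<And>x. x \<in> pp_fv \<phi> \<Longrightarrow> s x = s' x) \<Longrightarrow> pp_sat \<phi> s \<longleftrightarrow> pp_sat \<phi> s'"
proof (induction \<phi> arbitrary: s s')
  case (PAtom R vs)
  then have "map s vs = map s' vs"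
    by (intro map_cong) auto
  then show ?case
    by (simp only: pp_sat.simps)
next
  case (PEx v \<phi>)
  have "pp_sat \<phi> (s(v := x)) \<longleftrightarrow> pp_sat \<phi> (s'(v := x))" for x
    using PEx.prems by (intro PEx.IH) auto
  then show ?case
    by simp
next
  case (PConj \<phi> \<psi>)
  have "pp_sat \<phi> s \<longleftrightarrow> pp_sat \<phi> s'" "pp_sat \<psi> s \<longleftrightarrow> pp_sat \<psi> s'"
    using PConj.prems by (intro PConj.IH; simp)+
  then show ?case
    by simp
qed simp

lemma pp_sat_comp_endomorphism:
  assumes "endomorphism \<Gamma> e" "pp_atoms \<phi> \<subseteq> snd ` \<Gamma>" "pp_sat \<phi> s"
  shows "pp_sat \<phi> (e \<circ> s)"
  using assms(2,3)
proof (induction \<phi> arbitrary: s)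
  case (PAtom R vs)
  then obtain n where "(n, R) \<in> \<Gamma>"
    by force
  with PAtom assms(1) show ?case
    unfolding endomorphism_def by (fastforce simp: comp_def)
next
  case (PEx v \<phi>)
  then obtain x where "pp_sat \<phi> (s(v := x))"
    by auto
  moreover have "pp_atoms \<phi> \<subseteq> snd ` \<Gamma>"
    using PEx.prems(1) by simp
  ultimately have "pp_sat \<phi> (e \<circ> s(v := x))"
    using PEx.IH by blast
  moreover have "e \<circ> s(v := x) = (e \<circ> s)(v := e x)"
    by (auto simp: fun_eq_iff)
  ultimately show ?case
    unfolding pp_sat.simps by (intro exI) simp
qed auto

lemma pp_definable_endomorphism:
  assumes "endomorphism \<Gamma> e" "pp_definable (snd ` \<Gamma>) n S" "t \<in> S"
  shows "map e t \<in> S"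
proof -
  obtain \<phi> where \<phi>: "pp_atoms \<phi> \<subseteq> snd ` \<Gamma>" "pp_fv \<phi> \<subseteq> {..<n}"
    and S: "S = {t. length t = n \<and> pp_sat \<phi> (\<lambda>i. t ! i)}"
    using assms(2) unfolding pp_definable_def by blast
  with assms(3) have "length t = n" "pp_sat \<phi> (e \<circ> (\<lambda>i. t ! i))"
    using pp_sat_comp_endomorphism[OF assms(1)] by auto
  moreover have "pp_sat \<phi> (e \<circ> (\<lambda>i. t ! i)) \<longleftrightarrow> pp_sat \<phi> (\<lambda>i. map e t ! i)"
    using \<phi>(2) \<open>length t = n\<close> by (intro pp_sat_cong) auto
  ultimately show ?thesis
    by (simp add: S)
qed

lemma endomorphism_qz_add:
  assumes "endomorphism \<Gamma> e" "(2, suc_rel) \<in> \<Gamma>"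
  shows "e (qz_add x k) = qz_add (e x) k"
proof -
  have step: "e (qz_add y 1) = qz_add (e y) 1" for y
    using assms suc_rel_iff[of y "qz_add y 1"] unfolding endomorphism_def by fastforce
  show ?thesis
  proof (induction k rule: int_induct[where k = 0])
    case (step1 i)
    then show ?case
      using step[of "qz_add x i"] by simp
  next
    case (step2 i)
    have "qz_add (e (qz_add x (i - 1))) 1 = qz_add (e x) i"
      using step[of "qz_add x (i - 1)"] step2 by simp
    then have "qz_add (qz_add (e (qz_add x (i - 1))) 1) (- 1) = qz_add (qz_add (e x) i) (- 1)"
      by (rule arg_cong)
    then show ?case
      by simp
  qed simp
qed

definition split_assignment :: "nat set \<Rightarrow> (nat \<Rightarrow> int) \<Rightarrow> (nat \<Rightarrow> int) \<Rightarrow> qz \<Rightarrow> qz \<Rightarrow> nat \<Rightarrow> qz" where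
  "split_assignment I a b x y k = (if k \<in> I then qz_add x (a k) else qz_add y (b k))"

definition pp_conj_list :: "pp list \<Rightarrow> pp" where
  "pp_conj_list \<phi>s = foldr PConj \<phi>s (PEq 0 0)"

lemma pp_sat_pp_conj_list: "pp_sat (pp_conj_list \<phi>s) s \<longleftrightarrow> (\<forall>\<phi>\<in>set \<phi>s. pp_sat \<phi> s)"
  by (induction \<phi>s) (auto simp: pp_conj_list_def)

lemma pp_fv_pp_conj_list: "pp_fv (pp_conj_list \<phi>s) \<subseteq> {0} \<union> (\<Union>\<phi>\<in>set \<phi>s. pp_fv \<phi>)"
  by (induction \<phi>s) (auto simp: pp_conj_list_def)

lemma pp_atoms_pp_conj_list: "pp_atoms (pp_conj_list \<phi>s) = (\<Union>\<phi>\<in>set \<phi>s. pp_atoms \<phi>)"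
  by (induction \<phi>s) (auto simp: pp_conj_list_def)

lemma pp_sat_foldr_PEx:
  "pp_sat (foldr PEx vs \<phi>) s \<longleftrightarrow> (\<exists>g. pp_sat \<phi> (\<lambda>x. if x \<in> set vs then g x else s x))"
proof (induction vs arbitrary: s)
  case (Cons v vs)
  have "pp_sat (foldr PEx (v # vs) \<phi>) s \<longleftrightarrow>
      (\<exists>x g. pp_sat \<phi> (\<lambda>y. if y \<in> set vs then g y else (s(v := x)) y))"
    by (simp add: Cons.IH)
  also have "\<dots> \<longleftrightarrow> (\<exists>g. pp_sat \<phi> (\<lambda>y. if y \<in> set (v # vs) then g y else s y))"
  proof
    assume "\<exists>x g. pp_sat \<phi> (\<lambda>y. if y \<in> set vs then g y else (s(v := x)) y)"
    then obtain x g where "pp_sat \<phi> (\<lambda>y. if y \<in> set vs then g y else (s(v := x)) y)"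
      by blast
    then have "pp_sat \<phi> (\<lambda>y. if y \<in> set (v # vs) then (if y \<in> set vs then g y else x) else s y)"
      by (rule back_subst[of "pp_sat \<phi>"]) (auto simp: fun_eq_iff)
    then show "\<exists>g. pp_sat \<phi> (\<lambda>y. if y \<in> set (v # vs) then g y else s y)"
      by (rule exI[of _ "\<lambda>y. if y \<in> set vs then g y else x"])
  next
    assume "\<exists>g. pp_sat \<phi> (\<lambda>y. if y \<in> set (v # vs) then g y else s y)"
    then obtain g where "pp_sat \<phi> (\<lambda>y. if y \<in> set (v # vs) then g y else s y)"
      by blast
    then have "pp_sat \<phi> (\<lambda>y. if y \<in> set vs then g y else (s(v := g v)) y)"
      by (rule back_subst[of "pp_sat \<phi>"]) (auto simp: fun_eq_iff)
    then show "\<exists>x g. pp_sat \<phi> (\<lambda>y. if y \<in> set vs then g y else (s(v := x)) y)"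
      by blast
  qed
  finally show ?case .
qed simp

lemma pp_fv_foldr_PEx: "pp_fv (foldr PEx vs \<phi>) = pp_fv \<phi> - set vs"
  by (induction vs) auto

lemma pp_atoms_foldr_PEx: "pp_atoms (foldr PEx vs \<phi>) = pp_atoms \<phi>"
  by (induction vs) auto

text \<open>Variables \<open>0\<close> and \<open>1\<close> stand for \<open>x\<close> and \<open>y\<close>; the \<open>k\<close>-th argument of \<open>R\<close>
  is the existentially quantified variable \<open>k + 2\<close>.\<close>

definition pp_split_anchor :: "nat \<Rightarrow> nat set \<Rightarrow> (nat \<Rightarrow> int) \<Rightarrow> (nat \<Rightarrow> int) \<Rightarrow> nat \<Rightarrow> pp" where
  "pp_split_anchor n I a b k =
     (if k \<in> I then pp_offset 0 (k + 2) (a k) (n + 2) else pp_offset 1 (k + 2) (b k) (n + 2))"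

definition pp_split_body :: "qz list set \<Rightarrow> nat \<Rightarrow> nat set \<Rightarrow> (nat \<Rightarrow> int) \<Rightarrow> (nat \<Rightarrow> int) \<Rightarrow> pp" where
  "pp_split_body R n I a b =
     PConj (PAtom R (map (\<lambda>k. k + 2) [0..<n])) (pp_conj_list (map (pp_split_anchor n I a b) [0..<n]))"

definition pp_split :: "qz list set \<Rightarrow> nat \<Rightarrow> nat set \<Rightarrow> (nat \<Rightarrow> int) \<Rightarrow> (nat \<Rightarrow> int) \<Rightarrow> pp" where
  "pp_split R n I a b = foldr PEx [2..<n + 2] (pp_split_body R n I a b)"

lemma pp_sat_pp_split_anchor:
  "k < n \<Longrightarrow> pp_sat (pp_split_anchor n I a b k) t \<longleftrightarrow> t (k + 2) = split_assignment I a b (t 0) (t 1) k"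
  by (simp add: pp_split_anchor_def pp_sat_pp_offset split_assignment_def)

lemma pp_sat_pp_split_body:
  "pp_sat (pp_split_body R n I a b) t \<longleftrightarrow>
     map (\<lambda>k. t (k + 2)) [0..<n] \<in> R \<and> (\<forall>k<n. t (k + 2) = split_assignment I a b (t 0) (t 1) k)"
  by (auto simp: pp_split_body_def pp_sat_pp_conj_list pp_sat_pp_split_anchor comp_def)

lemma pp_sat_pp_split:
  "pp_sat (pp_split R n I a b) \<sigma> \<longleftrightarrow> map (split_assignment I a b (\<sigma> 0) (\<sigma> 1)) [0..<n] \<in> R"
    (is "_ \<longleftrightarrow> map ?U _ \<in> R")
proof -
  let ?s = "\<lambda>g x. if x \<in> set [2..<n + 2] then g x else \<sigma> x"
  have s01: "?s g 0 = \<sigma> 0" "?s g 1 = \<sigma> 1" for g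
    by auto
  show ?thesis
  proof
    assume "pp_sat (pp_split R n I a b) \<sigma>"
    then obtain g where g: "map (\<lambda>k. ?s g (k + 2)) [0..<n] \<in> R" "\<forall>k<n. ?s g (k + 2) = ?U k"
      unfolding pp_split_def pp_sat_foldr_PEx pp_sat_pp_split_body s01 by blast
    have eq: "map (\<lambda>k. ?s g (k + 2)) [0..<n] = map ?U [0..<n]"
      using g(2) by (intro map_cong) auto
    show "map ?U [0..<n] \<in> R"
      using g(1) unfolding eq .
  next
    assume R: "map ?U [0..<n] \<in> R"
    define g where "g = (\<lambda>x. ?U (x - 2))"
    have gk: "?s g (k + 2) = ?U k" if "k < n" for k
    proof -
      from that have k: "k + 2 \<in> set [2..<n + 2]"
        by (simp only: set_upt atLeastLessThan_iff) linarith
      show ?thesis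
        unfolding if_P[OF k] by (simp add: g_def)
    qed
    then have eq: "map (\<lambda>k. ?s g (k + 2)) [0..<n] = map ?U [0..<n]"
      by (intro map_cong) auto
    have "map (\<lambda>k. ?s g (k + 2)) [0..<n] \<in> R \<and> (\<forall>k<n. ?s g (k + 2) = ?U k)"
      using R gk unfolding eq by blast
    then show "pp_sat (pp_split R n I a b) \<sigma>"
      unfolding pp_split_def pp_sat_foldr_PEx pp_sat_pp_split_body s01 by (rule exI[of _ g])
  qed
qed

lemma pp_definable_split_relation:
  assumes "R \<in> A" "suc_rel \<in> A"
  shows "pp_definable A 2 {t. length t = 2 \<and> map (split_assignment I a b (t ! 0) (t ! 1)) [0..<n] \<in> R}"
proof -
  have "pp_fv (pp_split_anchor n I a b k) \<subseteq> {0, 1, k + 2}" if "k < n" for k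
    using that pp_fv_pp_offset[of 0 "n + 2" "k + 2"] pp_fv_pp_offset[of 1 "n + 2" "k + 2"]
    by (auto simp: pp_split_anchor_def)
  then have "pp_fv (pp_conj_list (map (pp_split_anchor n I a b) [0..<n])) \<subseteq> {0, 1} \<union> set [2..<n + 2]"
    using pp_fv_pp_conj_list[of "map (pp_split_anchor n I a b) [0..<n]"] by fastforce
  then have "pp_fv (pp_split R n I a b) \<subseteq> {..<2}"
    by (auto simp: pp_split_def pp_split_body_def pp_fv_foldr_PEx)
  moreover have "pp_atoms (pp_split R n I a b) \<subseteq> A"
  proof -
    have "pp_atoms (pp_offset x y c v) \<subseteq> A" for x y c v
      using pp_atoms_pp_offset assms(2) by blast
    then have "pp_atoms (pp_split_anchor n I a b k) \<subseteq> A" for k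
      by (simp add: pp_split_anchor_def)
    then show ?thesis
      by (auto simp: pp_split_def pp_split_body_def pp_atoms_foldr_PEx pp_atoms_pp_conj_list assms(1))
  qed
  ultimately show ?thesis
    unfolding pp_definable_def pp_sat_pp_split[symmetric] by blast
qed

fun lit_split :: "nat set \<Rightarrow> (nat \<Rightarrow> int) \<Rightarrow> (nat \<Rightarrow> int) \<Rightarrow> lit \<Rightarrow> lit" where
  "lit_split I a b (bb, q, k, m) =
     (bb, (if k \<in> I then a k else b k) + q - (if m \<in> I then a m else b m),
      if k \<in> I then 0 else 1, if m \<in> I then 0 else 1)"

lemma lit_sat_lit_split: "lit_sat (lit_split I a b l) \<sigma> \<longleftrightarrow> lit_sat l (split_assignment I a b (\<sigma> 0) (\<sigma> 1))"
  by (cases l) (auto simp: split_assignment_def eq_qz_add_iff)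

lemma fo_definable_split_relation:
  "fo_definable 2 {t. length t = 2 \<and> dnf_sat D (split_assignment I a b (t ! 0) (t ! 1))}"
proof -
  let ?D = "map (map (lit_split I a b)) D"
  have "dnf_sat ?D \<sigma> \<longleftrightarrow> dnf_sat D (split_assignment I a b (\<sigma> 0) (\<sigma> 1))" for \<sigma>
    by (simp add: dnf_sat_def lit_sat_lit_split del: lit_sat.simps lit_split.simps)
  moreover have "dnf_vars ?D \<subseteq> {..<2}"
  proof -
    have split_vars: "lit_vars (lit_split I a b l) \<subseteq> {..<2}" for l
      by (cases l) auto
    show ?thesis
      unfolding dnf_vars_def set_map
      by (fastforce dest: subsetD[OF split_vars] simp del: lit_vars.simps lit_split.simps)
  qed
  ultimately show ?thesis
    using fo_definable_dnf[of ?D 2] by simp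
qed

section \<open>Reduced DNF formulas\<close>

lemma set_remove_nth_subset: "set (take i xs @ drop (Suc i) xs) \<subseteq> set xs"
  by (auto dest: in_set_takeD in_set_dropD)

lemma set_subset_insert_remove_nth:
  "i < length xs \<Longrightarrow> set xs \<subseteq> insert (xs ! i) (set (take i xs @ drop (Suc i) xs))"
  by (subst (1) id_take_nth_drop[of i xs]) auto

lemma dnf_vars_mono: "set D' \<subseteq> set D \<Longrightarrow> dnf_vars D' \<subseteq> dnf_vars D"
  unfolding dnf_vars_def by blast

lemma dnf_vars_singleton_mono: "set c' \<subseteq> set c \<Longrightarrow> dnf_vars [c'] \<subseteq> dnf_vars [c]"
  unfolding dnf_vars_singleton by blast

definition dnf_size :: "dnf \<Rightarrow> nat" where
  "dnf_size D = sum_list (map (\<lambda>c. Suc (length c)) D)"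

lemma dnf_size_remove_nth: "i < length D \<Longrightarrow> dnf_size (take i D @ drop (Suc i) D) < dnf_size D"
  by (subst (2) id_take_nth_drop[of i D]) (simp_all add: dnf_size_def)

lemma dnf_size_remove_literal:
  "i < length D \<Longrightarrow> j < length (D ! i) \<Longrightarrow>
     dnf_size (D[i := take j (D ! i) @ drop (Suc j) (D ! i)]) < dnf_size D"
  by (subst (2) id_take_nth_drop[of i D]) (simp_all add: dnf_size_def upd_conv_take_nth_drop)

lemma exists_reduced_dnf: "\<exists>D'. dnf_equiv D D' \<and> reduced_dnf D' \<and> dnf_vars D' \<subseteq> dnf_vars D"
proof (induction "dnf_size D" arbitrary: D rule: less_induct)
  case less
  show ?case
  proof (cases "reduced_dnf D")
    case True
    then show ?thesis
      by (auto simp: dnf_equiv_def)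
  next
    case False
    obtain D1 where D1: "dnf_equiv D D1" "dnf_size D1 < dnf_size D" "dnf_vars D1 \<subseteq> dnf_vars D"
    proof (cases "\<exists>i < length D. dnf_equiv D (take i D @ drop (Suc i) D)")
      case True
      then obtain i where "i < length D" "dnf_equiv D (take i D @ drop (Suc i) D)"
        by blast
      moreover have "dnf_vars (take i D @ drop (Suc i) D) \<subseteq> dnf_vars D"
        using set_remove_nth_subset by (rule dnf_vars_mono)
      ultimately show ?thesis
        using that dnf_size_remove_nth by blast
    next
      case False
      with \<open>\<not> reduced_dnf D\<close> obtain i j where ij: "i < length D" "j < length (D ! i)"
        "dnf_equiv D (D[i := take j (D ! i) @ drop (Suc j) (D ! i)])"
        unfolding reduced_dnf_def by blast
      let ?c' = "take j (D ! i) @ drop (Suc j) (D ! i)"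
      have "dnf_vars (D[i := ?c']) \<subseteq> dnf_vars (?c' # D)"
        using set_update_subset_insert by (intro dnf_vars_mono) simp
      also have "\<dots> \<subseteq> dnf_vars D"
      proof -
        have "dnf_vars [?c'] \<subseteq> dnf_vars [D ! i]"
          using set_remove_nth_subset by (rule dnf_vars_singleton_mono)
        also have "\<dots> \<subseteq> dnf_vars D"
          using ij(1) by (intro dnf_vars_mono) simp
        finally show ?thesis
          using dnf_vars_Cons[of ?c' D] by blast
      qed
      finally have "dnf_vars (D[i := ?c']) \<subseteq> dnf_vars D" .
      with ij show ?thesis
        using that dnf_size_remove_literal by blast
    qed
    with less obtain D' where D': "dnf_equiv D1 D'" "reduced_dnf D'" "dnf_vars D' \<subseteq> dnf_vars D1"
      by blast
    have "dnf_equiv D D'"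
      using D1(1) D'(1) unfolding dnf_equiv_def by simp
    with D1(3) D'(2,3) show ?thesis
      by blast
  qed
qed

lemma exists_reduced_dnf_defines: "dnf_defines n D R \<Longrightarrow> \<exists>D'. dnf_defines n D' R \<and> reduced_dnf D'"
  using exists_reduced_dnf[of D] unfolding dnf_defines_iff dnf_equiv_def by fastforce

text \<open>The two witnesses of reducedness for a negative literal \<open>\<not> suc\<^sup>p(x\<^sub>i, x\<^sub>j)\<close> in a
  disjunct \<open>c\<close>: \<open>s\<close> shows that the literal cannot be dropped, \<open>t\<close> that \<open>c\<close> cannot.\<close>

lemma reduced_dnf_negative_literal:
  assumes "reduced_dnf D" "c \<in> set D" "(False, p, i, j) \<in> set c"
  obtains s t where "\<not> dnf_sat D s" "s j = qz_add (s i) p"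
    "\<forall>l\<in>set c - {(False, p, i, j)}. lit_sat l s" "\<forall>l\<in>set c. lit_sat l t"
proof -
  let ?l = "(False, p, i, j)"
  obtain ci where ci: "ci < length D" "D ! ci = c"
    using assms(2) by (auto simp: in_set_conv_nth)
  obtain lj where lj: "lj < length c" "c ! lj = ?l"
    using assms(3) by (auto simp: in_set_conv_nth)
  define c' where "c' = take lj c @ drop (Suc lj) c"
  have c'_sub: "set c' \<subseteq> set c" and c_sub: "set c \<subseteq> insert ?l (set c')"
    using set_remove_nth_subset[of lj c] set_subset_insert_remove_nth[OF lj(1)] lj(2)
    by (auto simp: c'_def)
  have "\<not> dnf_equiv D (D[ci := c'])"
    using assms(1) ci lj unfolding reduced_dnf_def c'_def by blast
  then obtain s where s: "dnf_sat D s \<noteq> dnf_sat (D[ci := c']) s"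
    unfolding dnf_equiv_def by blast
  have D_sub: "set D \<subseteq> insert c (set (D[ci := c']))"
    using set_update_subset_insert[of "D[ci := c']" ci c] ci list_update_id[of D ci] by simp
  have c'_mem: "c' \<in> set (D[ci := c'])"
    using ci(1) by (simp add: set_update_memI)
  have "dnf_sat (D[ci := c']) s" if "dnf_sat D s"
    using that D_sub c'_mem c'_sub unfolding dnf_sat_def by blast
  with s have s_not: "\<not> dnf_sat D s" and "dnf_sat (D[ci := c']) s"
    by auto
  then have s_c': "\<forall>l\<in>set c'. lit_sat l s"
    using set_update_subset_insert[of D ci c'] unfolding dnf_sat_def by blast
  have "\<not> lit_sat ?l s"
    using s_not s_c' assms(2) c_sub unfolding dnf_sat_def by blast
  then have s_ij: "s j = qz_add (s i) p"
    by simp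
  have "\<not> dnf_equiv D (take ci D @ drop (Suc ci) D)"
    using assms(1) ci unfolding reduced_dnf_def by blast
  then obtain t where "dnf_sat D t \<noteq> dnf_sat (take ci D @ drop (Suc ci) D) t"
    unfolding dnf_equiv_def by blast
  then have t_c: "\<forall>l\<in>set c. lit_sat l t"
    using set_remove_nth_subset[of ci D] set_subset_insert_remove_nth[OF ci(1)] ci(2)
    unfolding dnf_sat_def by blast
  show ?thesis
    using s_not s_ij s_c' c_sub t_c by (intro that[of s t]) blast+
qed

definition pos_graph :: "lit list \<Rightarrow> (nat \<times> nat) set" where
  "pos_graph c = {(k, m). \<exists>q. (True, q, k, m) \<in> set c \<or> (True, q, m, k) \<in> set c}"

lemma pos_graph_offset:
  assumes "(a, k) \<in> (pos_graph c)\<^sup>*"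
  shows "\<exists>d. \<forall>u. (\<forall>l\<in>set c. fst l \<longrightarrow> lit_sat l u) \<longrightarrow> u k = qz_add (u a) d"
  using assms
proof (induction rule: rtrancl_induct)
  case base
  show ?case
    by (intro exI[of _ 0]) simp
next
  case (step m k)
  then obtain d where d: "\<forall>u. (\<forall>l\<in>set c. fst l \<longrightarrow> lit_sat l u) \<longrightarrow> u m = qz_add (u a) d"
    by blast
  from step(2) obtain q where "(True, q, m, k) \<in> set c \<or> (True, q, k, m) \<in> set c"
    unfolding pos_graph_def by blast
  then obtain e where e: "\<forall>u. (\<forall>l\<in>set c. fst l \<longrightarrow> lit_sat l u) \<longrightarrow> u k = qz_add (u m) e"
  proof (elim disjE)
    assume "(True, q, m, k) \<in> set c"
    then show thesis
      using that[of q] by fastforce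
  next
    assume "(True, q, k, m) \<in> set c"
    then show thesis
      using that[of "- q"] by (fastforce simp: eq_qz_add_swap[of "_ m"])
  qed
  with d show ?case
    by (intro exI[of _ "d + e"] allI impI) (metis qz_add_assoc)
qed

section \<open>Moving an assignment into one copy of \<open>\<int>\<close>\<close>

text \<open>The copies hit by \<open>s\<close> are laid out on the copy \<open>0\<close> at distance at least \<open>K\<close>
  from each other, so that no literal with offset at most \<open>M\<close> can relate two of them.\<close>

lemma spread_copies:
  fixes s :: "nat \<Rightarrow> qz" and M :: int
  assumes "finite V"
  obtains w where "\<And>k. fst (w k) = 0"
    "\<And>k m q. k \<in> V \<Longrightarrow> m \<in> V \<Longrightarrow> \<bar>q\<bar> \<le> M \<Longrightarrow> w m = qz_add (w k) q \<longleftrightarrow> s m = qz_add (s k) q"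
proof -
  obtain f :: "rat \<Rightarrow> nat" where f: "inj_on f (fst ` s ` V)"
    using finite_imp_inj_to_nat_seg assms by blast
  define A where "A = Max (insert 0 ((\<lambda>k. \<bar>snd (s k)\<bar>) ` V))"
  have A: "\<bar>snd (s k)\<bar> \<le> A" if "k \<in> V" for k
    unfolding A_def using that assms by (intro Max_ge) auto
  have "0 \<le> A"
    unfolding A_def using assms by (intro Max_ge) auto
  define K where "K = 2 * A + \<bar>M\<bar> + 1"
  define w where "w k = ((0::rat), snd (s k) + K * int (f (fst (s k))))" for k
  have "w m = qz_add (w k) q \<longleftrightarrow> s m = qz_add (s k) q" if km: "k \<in> V" "m \<in> V" "\<bar>q\<bar> \<le> M" for k m q
  proof (cases "fst (s m) = fst (s k)")
    case True
    then show ?thesis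
      by (simp add: w_def eq_qz_add_iff)
  next
    case False
    with f km have "f (fst (s m)) \<noteq> f (fst (s k))"
      by (meson image_eqI inj_on_eq_iff)
    then have "K \<le> \<bar>K * (int (f (fst (s m))) - int (f (fst (s k))))\<bar>"
      using \<open>0 \<le> A\<close> by (simp add: K_def abs_mult)
    moreover have "\<bar>snd (s k) - snd (s m) + q\<bar> < K"
      using A[OF km(1)] A[OF km(2)] km(3) by (simp add: K_def)
    ultimately have "w m \<noteq> qz_add (w k) q"
      by (auto simp: w_def eq_qz_add_iff algebra_simps)
    with False show ?thesis
      by (simp add: eq_qz_add_iff)
  qed
  then show ?thesis
    using that[of w] by (simp add: w_def)
qed

lemma exists_one_copy_assignment:
  obtains w where "\<And>k. fst (w k) = 0" "\<And>c l. c \<in> set D \<Longrightarrow> l \<in> set c \<Longrightarrow> lit_sat l w \<longleftrightarrow> lit_sat l s"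
proof -
  obtain M where M: "\<forall>c\<in>set D. \<forall>(b, q, k, m)\<in>set c. \<bar>q\<bar> \<le> M"
    using dnf_offset_bound by metis
  obtain w where w0: "\<And>k. fst (w k) = 0" and w: "\<And>k m q. k \<in> dnf_vars D \<Longrightarrow> m \<in> dnf_vars D \<Longrightarrow>
      \<bar>q\<bar> \<le> M \<Longrightarrow> w m = qz_add (w k) q \<longleftrightarrow> s m = qz_add (s k) q"
    using spread_copies[OF finite_dnf_vars] by blast
  have "lit_sat l w \<longleftrightarrow> lit_sat l s" if "c \<in> set D" "l \<in> set c" for c l
  proof (cases l)
    case (fields b q k m)
    with that M lit_vars_subset_dnf_vars[OF that] show ?thesis
      using w by force
  qed
  with w0 show ?thesis
    using that by blast
qed

lemma pair_eq_qz_add_iff: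
  "k < 2 \<Longrightarrow> m < 2 \<Longrightarrow> [x, y] ! m = qz_add ([x, y] ! k) q \<longleftrightarrow>
     (if k = m then q = 0 else if k = 0 then fst y = fst x \<and> snd y = snd x + q
      else fst x = fst y \<and> snd x = snd y + q)"
  by (auto simp: less_2_cases_iff eq_qz_add_iff)

lemma dnf_sat_pair_cong:
  assumes "dnf_vars D \<subseteq> {..<2}"
    and "\<And>b q k m. (b, q, k, m) \<in> (\<Union>c\<in>set D. set c) \<Longrightarrow> k < 2 \<Longrightarrow> m < 2 \<Longrightarrow>
      [x, y] ! m = qz_add ([x, y] ! k) q \<longleftrightarrow> [x', y'] ! m = qz_add ([x', y'] ! k) q"
  shows "dnf_sat D (\<lambda>i. [x, y] ! i) \<longleftrightarrow> dnf_sat D (\<lambda>i. [x', y'] ! i)"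
proof (rule dnf_sat_cong_lit)
  fix c l
  assume cl: "c \<in> set D" "l \<in> set c"
  obtain b q k m where l: "l = (b, q, k, m)"
    by (cases l)
  with lit_vars_subset_dnf_vars[OF cl] assms(1) have "k < 2" "m < 2"
    by auto
  with cl l assms(2)[of b q k m] show "lit_sat l (\<lambda>i. [x, y] ! i) \<longleftrightarrow> lit_sat l (\<lambda>i. [x', y'] ! i)"
    by auto
qed

lemma dnf_defines_pair_mem_iff: "dnf_defines 2 D S \<Longrightarrow> [x, y] \<in> S \<longleftrightarrow> dnf_sat D (\<lambda>i. [x, y] ! i)"
  unfolding dnf_defines_iff by simp

lemma all_less_infinity_iff: "(\<forall>x<\<infinity>. P x) \<longleftrightarrow> (\<forall>N. P (enat N))"
  by (metis enat_ord_simps(4) not_infinity_eq order_less_irrefl)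

lemma distance_degree_eq_infinity_iff:
  "distance_degree S = \<infinity> \<longleftrightarrow>
     (\<forall>N. \<exists>t\<in>S. fst (t ! 0) = fst (t ! 1) \<and> N < nat \<bar>snd (t ! 1) - snd (t ! 0)\<bar>)"
proof -
  have "distance_degree S = \<infinity> \<longleftrightarrow>
      (\<forall>x<\<infinity>. \<exists>t\<in>{t \<in> S. fst (t ! 0) = fst (t ! 1)}. x < enat (nat \<bar>snd (t ! 1) - snd (t ! 0)\<bar>))"
    unfolding distance_degree_def top_enat_def[symmetric] by (rule SUP_eq_top_iff)
  also have "\<dots> \<longleftrightarrow> (\<forall>N. \<exists>t\<in>S. fst (t ! 0) = fst (t ! 1) \<and> N < nat \<bar>snd (t ! 1) - snd (t ! 0)\<bar>)"
    unfolding all_less_infinity_iff by (simp add: Bex_def)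
  finally show ?thesis .
qed

lemma length_2_conv: "length t = 2 \<longleftrightarrow> t = [t ! 0, t ! 1]"
  by (cases t rule: remdups_adj.cases) auto

lemma dnf_defines_pair_translate:
  assumes "dnf_defines 2 D S" "fst x = fst y" "fst x' = fst y'" "snd y - snd x = snd y' - snd x'"
  shows "[x, y] \<in> S \<longleftrightarrow> [x', y'] \<in> S"
proof -
  have "dnf_sat D (\<lambda>i. [x, y] ! i) \<longleftrightarrow> dnf_sat D (\<lambda>i. [x', y'] ! i)"
    using assms unfolding dnf_defines_iff
    by (intro dnf_sat_pair_cong) (auto simp: pair_eq_qz_add_iff)
  with assms(1) show ?thesis
    by (simp add: dnf_defines_pair_mem_iff)
qed

text \<open>A literal with offset bounded by \<open>M\<close> cannot see the difference between a pair
  at distance more than \<open>M\<close> inside one copy and a pair in two different copies.\<close>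

lemma infinite_distance_degree_imp_cross_pairs:
  assumes "dnf_defines 2 D S" "distance_degree S = \<infinity>" "fst x \<noteq> fst y"
  shows "[x, y] \<in> S"
proof -
  obtain M where M: "\<forall>c\<in>set D. \<forall>(b, q, k, m)\<in>set c. \<bar>q\<bar> \<le> M"
    using dnf_offset_bound by metis
  obtain t where t: "t \<in> S" "fst (t ! 0) = fst (t ! 1)" "nat M < nat \<bar>snd (t ! 1) - snd (t ! 0)\<bar>"
    using assms(2) unfolding distance_degree_eq_infinity_iff by blast
  moreover have "length t = 2"
    using t(1) assms(1) unfolding dnf_defines_iff by simp
  ultimately have "[t ! 0, t ! 1] \<in> S"
    by (metis length_2_conv)
  moreover have "dnf_sat D (\<lambda>i. [t ! 0, t ! 1] ! i) \<longleftrightarrow> dnf_sat D (\<lambda>i. [x, y] ! i)"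
  proof (rule dnf_sat_pair_cong)
    show "dnf_vars D \<subseteq> {..<2}"
      using assms(1) unfolding dnf_defines_iff by blast
    fix b q k m
    assume "(b, q, k, m) \<in> (\<Union>c\<in>set D. set c)" "k < 2" "m < 2"
    with M t(2,3) assms(3) show "[t ! 0, t ! 1] ! m = qz_add ([t ! 0, t ! 1] ! k) q \<longleftrightarrow>
        [x, y] ! m = qz_add ([x, y] ! k) q"
      by (force simp: pair_eq_qz_add_iff)
  qed
  ultimately show ?thesis
    using assms(1) by (simp add: dnf_defines_pair_mem_iff)
qed

lemma pp_definable_all_pairs: "pp_definable A 2 {t. length t = 2}"
  unfolding pp_definable_def by (intro exI[of _ "PEq 0 0"]) auto

definition collapse :: "qz \<Rightarrow> qz" where
  "collapse x = (0, snd x)"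

lemma collapse_qz_add [simp]: "collapse (qz_add x k) = qz_add (collapse x) k"
  by (simp add: collapse_def qz_add_def)

lemma positive_dnf_collapse:
  assumes "dnf_defines n D R" "positive_dnf D" "t \<in> R"
  shows "map collapse t \<in> R"
proof -
  have t: "length t = n" "dnf_sat D (\<lambda>i. t ! i)" and vars: "dnf_vars D \<subseteq> {..<n}"
    using assms(1,3) unfolding dnf_defines_iff by auto
  then obtain c where c: "c \<in> set D" "\<forall>l\<in>set c. lit_sat l (\<lambda>i. t ! i)"
    unfolding dnf_sat_def by blast
  have "lit_sat l (\<lambda>i. map collapse t ! i)" if "l \<in> set c" for l
  proof (cases l)
    case (fields b p i j)
    have "fst l" "lit_sat l (\<lambda>i. t ! i)"
      using that c assms(2) unfolding positive_dnf_def by blast+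
    with fields have "b" "lit_sat l (\<lambda>i. t ! i)"
      by simp_all
    moreover have "i < n" "j < n"
      using lit_vars_subset_dnf_vars[OF c(1) that] vars fields by auto
    ultimately show ?thesis
      using fields t(1) by (metis collapse_qz_add lit_sat.simps nth_map)
  qed
  with c(1) have "dnf_sat D (\<lambda>i. map collapse t ! i)"
    unfolding dnf_sat_def by blast
  with t(1) assms(1) show ?thesis
    unfolding dnf_defines_iff by simp
qed

lemma endomorphism_collapse:
  assumes "fo_definable_structure \<Gamma>"
    and "\<forall>(n, R) \<in> \<Gamma>. \<forall>D. dnf_defines n D R \<and> reduced_dnf D \<longrightarrow> positive_dnf D"
  shows "endomorphism \<Gamma> collapse"
  unfolding endomorphism_def
proof (intro ballI, clarify)
  fix n R t
  assume nR: "(n, R) \<in> \<Gamma>" and t: "t \<in> R"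
  with assms(1) have "fo_definable n R"
    unfolding fo_definable_structure_def by blast
  then obtain D where "dnf_defines n D R" "reduced_dnf D"
    using fo_definable_imp_dnf_defines exists_reduced_dnf_defines by blast
  with assms(2) nR t show "map collapse t \<in> R"
    using positive_dnf_collapse by blast
qed

lemma collapsing_endomorphism_imp_finite_distance_degree:
  assumes suc: "(2, suc_rel) \<in> \<Gamma>" and e: "endomorphism \<Gamma> e"
    and ab: "fst a \<noteq> fst b" "fst (e a) = fst (e b)"
    and S: "pp_definable (snd ` \<Gamma>) 2 S" "nontrivial_binary S"
  shows "distance_degree S \<noteq> \<infinity>"
proof
  assume dd: "distance_degree S = \<infinity>"
  obtain D where D: "dnf_defines 2 D S"
    using S(2) fo_definable_imp_dnf_defines unfolding nontrivial_binary_def by blast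
  have "S \<noteq> {t. length t = 2}"
    using S(2) pp_definable_all_pairs unfolding nontrivial_binary_def by metis
  moreover have "S \<subseteq> {t. length t = 2}"
    using D unfolding dnf_defines_iff by blast
  ultimately obtain u where "length u = 2" "u \<notin> S"
    by blast
  moreover from \<open>length u = 2\<close> have "u = [u ! 0, u ! 1]"
    using length_2_conv by blast
  ultimately obtain x y where xy: "[x, y] \<notin> S"
    by metis
  then have "fst x = fst y"
    using infinite_distance_degree_imp_cross_pairs[OF D dd] by blast
  define b' where "b' = qz_add b (snd y - snd x - (snd (e b) - snd (e a)))"
  have "[a, b'] \<in> S"
    using infinite_distance_degree_imp_cross_pairs[OF D dd] ab(1) by (simp add: b'_def)
  then have "[e a, e b'] \<in> S"
    using pp_definable_endomorphism[OF e S(1)] by fastforce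
  have "e b' = qz_add (e b) (snd y - snd x - (snd (e b) - snd (e a)))"
    unfolding b'_def by (rule endomorphism_qz_add[OF e suc])
  then have "fst (e a) = fst (e b')" "snd y - snd x = snd (e b') - snd (e a)"
    using ab(2) by simp_all
  with \<open>[e a, e b'] \<in> S\<close> have "[x, y] \<in> S"
    using dnf_defines_pair_translate[OF D \<open>fst x = fst y\<close>] by blast
  with xy show False
    by contradiction
qed

locale split_witness =
  fixes D :: dnf and c :: "lit list" and I :: "nat set" and w :: "nat \<Rightarrow> qz" and i j :: nat and p :: int
  assumes clause: "c \<in> set D"
    and one_copy: "\<And>k. fst (w k) = 0"
    and offset: "w j = qz_add (w i) p"
    and not_sat: "\<not> dnf_sat D w"
    and block_sat: "\<And>b q k m. (b, q, k, m) \<in> set c \<Longrightarrow> k \<in> I \<longleftrightarrow> m \<in> I \<Longrightarrow> lit_sat (b, q, k, m) w"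
    and crossing_negative: "\<And>b q k m. (b, q, k, m) \<in> set c \<Longrightarrow> \<not> (k \<in> I \<longleftrightarrow> m \<in> I) \<Longrightarrow> \<not> b"
begin

abbreviation U :: "qz \<Rightarrow> qz \<Rightarrow> nat \<Rightarrow> qz" where
  "U \<equiv> split_assignment I (\<lambda>k. snd (w k) - snd (w i)) (\<lambda>k. snd (w k) - snd (w j))"

definition S :: "qz list set" where
  "S = {t. length t = 2 \<and> dnf_sat D (U (t ! 0) (t ! 1))}"

lemma pair_mem_S_iff: "[x, y] \<in> S \<longleftrightarrow> dnf_sat D (U x y)"
  by (simp add: S_def)

lemma U_shifted:
  "U x (qz_add x (p + \<Delta>)) k = qz_add x (snd (w k) - snd (w i) + (if k \<in> I then 0 else \<Delta>))"
  using offset by (auto simp: split_assignment_def eq_qz_add_iff)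

lemma U_shifted_eq_iff:
  "U x (qz_add x (p + \<Delta>)) m = qz_add (U x (qz_add x (p + \<Delta>)) k) q \<longleftrightarrow>
     snd (w m) + (if m \<in> I then 0 else \<Delta>) = snd (w k) + (if k \<in> I then 0 else \<Delta>) + q"
  unfolding U_shifted by (auto simp: eq_qz_add_iff)

lemma U_block_eq_iff:
  "k \<in> I \<longleftrightarrow> m \<in> I \<Longrightarrow> U x y m = qz_add (U x y k) q \<longleftrightarrow> snd (w m) = snd (w k) + q"
  by (cases "k \<in> I") (auto simp: split_assignment_def eq_qz_add_iff)

lemma U_crossing_neq: "\<not> (k \<in> I \<longleftrightarrow> m \<in> I) \<Longrightarrow> fst x \<noteq> fst y \<Longrightarrow> U x y m \<noteq> qz_add (U x y k) q"
  by (cases "k \<in> I") (auto simp: split_assignment_def eq_qz_add_iff)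

lemma w_eq_iff: "w m = qz_add (w k) q \<longleftrightarrow> snd (w m) = snd (w k) + q"
  using one_copy by (simp add: eq_qz_add_iff)

lemma shifted_pair_not_mem: "[x, qz_add x p] \<notin> S"
proof -
  have "lit_sat l (U x (qz_add x (p + 0))) \<longleftrightarrow> lit_sat l w" for l
    by (cases l) (simp only: lit_sat.simps U_shifted_eq_iff w_eq_iff, simp)
  then have "dnf_sat D (U x (qz_add x (p + 0))) \<longleftrightarrow> dnf_sat D w"
    by (intro dnf_sat_cong_lit)
  with not_sat show ?thesis
    by (simp add: pair_mem_S_iff)
qed

lemma cross_pair_mem: "fst x \<noteq> fst y \<Longrightarrow> [x, y] \<in> S"
proof -
  assume xy: "fst x \<noteq> fst y"
  have "lit_sat l (U x y)" if "l \<in> set c" for l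
  proof (cases l)
    case (fields b q k m)
    show ?thesis
    proof (cases "k \<in> I \<longleftrightarrow> m \<in> I")
      case True
      with that fields block_sat[of b q k m] show ?thesis
        by (simp add: U_block_eq_iff w_eq_iff)
    next
      case False
      with that fields crossing_negative[of b q k m] U_crossing_neq[OF False xy] show ?thesis
        by simp
    qed
  qed
  with clause show ?thesis
    unfolding pair_mem_S_iff dnf_sat_def by blast
qed

lemma far_shifted_pairs_mem: "\<exists>N. \<forall>x \<Delta>. N < \<Delta> \<longrightarrow> [x, qz_add x (p + \<Delta>)] \<in> S"
proof -
  define N where "N = Max (insert 0 ((\<lambda>(b, q, k, m). \<bar>snd (w k)\<bar> + \<bar>snd (w m)\<bar> + \<bar>q\<bar>) ` set c))"
  have N: "\<bar>snd (w k)\<bar> + \<bar>snd (w m)\<bar> + \<bar>q\<bar> \<le> N" if "(b, q, k, m) \<in> set c" for b q k m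
    unfolding N_def using that by (intro Max_ge) force+
  have "[x, qz_add x (p + \<Delta>)] \<in> S" if "N < \<Delta>" for x \<Delta>
  proof -
    have "lit_sat l (U x (qz_add x (p + \<Delta>)))" if "l \<in> set c" for l
    proof (cases l)
      case (fields b q k m)
      show ?thesis
      proof (cases "k \<in> I \<longleftrightarrow> m \<in> I")
        case True
        with that fields block_sat[of b q k m] show ?thesis
          by (cases "k \<in> I") (simp_all add: U_shifted_eq_iff w_eq_iff)
      next
        case False
        with that fields have "\<not> b"
          using crossing_negative by blast
        moreover have "\<bar>snd (w k)\<bar> + \<bar>snd (w m)\<bar> + \<bar>q\<bar> < \<Delta>"
          using N that fields \<open>N < \<Delta>\<close> by fastforce
        ultimately show ?thesis
          using False fields by (cases "k \<in> I") (auto simp: U_shifted_eq_iff)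
      qed
    qed
    with clause show ?thesis
      unfolding pair_mem_S_iff dnf_sat_def by blast
  qed
  then show ?thesis
    by blast
qed

lemma distance_degree_S: "distance_degree S = \<infinity>"
  unfolding distance_degree_eq_infinity_iff
proof
  fix N
  obtain K where K: "\<forall>x \<Delta>. K < \<Delta> \<longrightarrow> [x, qz_add x (p + \<Delta>)] \<in> S"
    using far_shifted_pairs_mem by blast
  define \<Delta> where "\<Delta> = \<bar>K\<bar> + int N + \<bar>p\<bar> + 1"
  have "[(0, 0), qz_add (0, 0) (p + \<Delta>)] \<in> S"
    using K by (simp add: \<Delta>_def)
  moreover have "N < nat \<bar>snd (qz_add (0, 0) (p + \<Delta>)) - snd ((0, 0) :: qz)\<bar>"
    by (simp add: \<Delta>_def)
  ultimately show "\<exists>t\<in>S. fst (t ! 0) = fst (t ! 1) \<and> N < nat \<bar>snd (t ! 1) - snd (t ! 0)\<bar>"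
    by force
qed

lemma not_pp_definable_suc_S: "\<not> pp_definable {suc_rel} 2 S"
proof
  assume "pp_definable {suc_rel} 2 S"
  then have "pp_definable (snd ` {(2, suc_rel)}) 2 S"
    by simp
  moreover have "endomorphism {(2, suc_rel)} collapse"
  proof -
    have "map collapse t \<in> suc_rel" if "t \<in> suc_rel" for t
    proof -
      from that obtain x where "t = [x, qz_add x 1]"
        unfolding suc_rel_def by blast
      then show ?thesis
        by simp
    qed
    then show ?thesis
      by (simp add: endomorphism_def)
  qed
  moreover have "[(0, 0), (1, p)] \<in> S"
    by (rule cross_pair_mem) simp
  ultimately have "map collapse [(0, 0), (1, p)] \<in> S"
    using pp_definable_endomorphism by blast
  moreover have "map collapse [(0, 0), (1, p)] = [(0, 0), qz_add (0, 0) p]"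
    by (simp add: collapse_def qz_add_def)
  ultimately show False
    using shifted_pair_not_mem by simp
qed

lemma fo_definable_S: "fo_definable 2 S"
  unfolding S_def by (rule fo_definable_split_relation)

lemma pp_definable_S:
  assumes "dnf_defines n D R" "R \<in> A" "suc_rel \<in> A"
  shows "pp_definable A 2 S"
proof -
  have "S = {t. length t = 2 \<and> map (U (t ! 0) (t ! 1)) [0..<n] \<in> R}"
    unfolding S_def dnf_defines_map_mem_iff[OF assms(1)] ..
  then show ?thesis
    using pp_definable_split_relation[OF assms(2,3)] by simp
qed

end

lemma nonpositive_reduced_dnf_imp_infinite_nontrivial:
  assumes suc: "(2, suc_rel) \<in> \<Gamma>" and R: "(n, R) \<in> \<Gamma>"
    and D: "dnf_defines n D R" "reduced_dnf D" "\<not> positive_dnf D"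
  shows "\<exists>S. pp_definable (snd ` \<Gamma>) 2 S \<and> nontrivial_binary S \<and> distance_degree S = \<infinity>"
proof -
  obtain c l where "c \<in> set D" "l \<in> set c" "\<not> fst l"
    using D(3) unfolding positive_dnf_def by blast
  then obtain p i j where c: "c \<in> set D" "(False, p, i, j) \<in> set c"
    by (cases l) auto
  let ?l = "(False, p, i, j)"
  obtain s t where s: "\<not> dnf_sat D s" "s j = qz_add (s i) p" "\<forall>l\<in>set c - {?l}. lit_sat l s"
    and t: "\<forall>l\<in>set c. lit_sat l t"
    using reduced_dnf_negative_literal[OF D(2) c] by blast
  define I where "I = {k. (i, k) \<in> (pos_graph c)\<^sup>*}"
  have "i \<in> I"
    by (simp add: I_def)
  have "j \<notin> I"
  proof
    assume "j \<in> I"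
    then obtain d where d: "\<forall>u. (\<forall>l\<in>set c. fst l \<longrightarrow> lit_sat l u) \<longrightarrow> u j = qz_add (u i) d"
      unfolding I_def using pos_graph_offset by blast
    moreover have "\<forall>l\<in>set c. fst l \<longrightarrow> lit_sat l s"
      using s(3) by fastforce
    ultimately have "s j = qz_add (s i) d" "t j = qz_add (t i) d"
      using t by blast+
    with s(2) t c(2) show False
      by auto
  qed
  obtain w where w: "\<And>k. fst (w k) = 0" "\<And>c l. c \<in> set D \<Longrightarrow> l \<in> set c \<Longrightarrow> lit_sat l w \<longleftrightarrow> lit_sat l s"
    using exists_one_copy_assignment by blast
  interpret split_witness D c I w i j p
  proof
    show "w j = qz_add (w i) p"
      using w(2)[OF c] s(2) by simp
    show "\<not> dnf_sat D w"
      using s(1) w(2) dnf_sat_cong_lit by blast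
    show "lit_sat (b, q, k, m) w" if "(b, q, k, m) \<in> set c" "k \<in> I \<longleftrightarrow> m \<in> I" for b q k m
      using that s(3) w(2)[OF c(1)] \<open>i \<in> I\<close> \<open>j \<notin> I\<close> by blast
    show "\<not> b" if "(b, q, k, m) \<in> set c" "\<not> (k \<in> I \<longleftrightarrow> m \<in> I)" for b q k m
    proof
      assume b
      with that(1) have "(k, m) \<in> pos_graph c" "(m, k) \<in> pos_graph c"
        unfolding pos_graph_def by auto
      then have "k \<in> I \<longleftrightarrow> m \<in> I"
        unfolding I_def by (auto intro: rtrancl_into_rtrancl)
      with that(2) show False
        by blast
    qed
  qed (use c w(1) in auto)
  have "R \<in> snd ` \<Gamma>" "suc_rel \<in> snd ` \<Gamma>"
    using R suc by force+
  then have "pp_definable (snd ` \<Gamma>) 2 S"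
    by (rule pp_definable_S[OF D(1)])
  then show ?thesis
    using fo_definable_S not_pp_definable_suc_S distance_degree_S
    unfolding nontrivial_binary_def by blast
qed

theorem mainTheorem16:
  fixes \<Gamma> :: qz_structure
  assumes "wf_structure \<Gamma>"
    and "fo_definable_structure \<Gamma>"
    and "(2, suc_rel) \<in> \<Gamma>"
  shows "((\<forall>(n, R) \<in> \<Gamma>. \<forall>D. dnf_defines n D R \<and> reduced_dnf D \<longrightarrow> positive_dnf D)
           \<longleftrightarrow> (\<exists>e a b. endomorphism \<Gamma> e \<and> fst a \<noteq> fst b \<and> fst (e a) = fst (e b)))
       \<and> ((\<exists>e a b. endomorphism \<Gamma> e \<and> fst a \<noteq> fst b \<and> fst (e a) = fst (e b))
           \<longleftrightarrow> \<not> (\<exists>S. pp_definable (snd ` \<Gamma>) 2 S \<and> nontrivial_binary S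
                      \<and> distance_degree S = \<infinity>))"
proof -
  let ?P1 = "\<forall>(n, R) \<in> \<Gamma>. \<forall>D. dnf_defines n D R \<and> reduced_dnf D \<longrightarrow> positive_dnf D"
  let ?P2 = "\<exists>e a b. endomorphism \<Gamma> e \<and> fst a \<noteq> fst b \<and> fst (e a) = fst (e b)"
  let ?P3 = "\<not> (\<exists>S. pp_definable (snd ` \<Gamma>) 2 S \<and> nontrivial_binary S \<and> distance_degree S = \<infinity>)"
  have "?P1 \<Longrightarrow> ?P2"
    using endomorphism_collapse[OF assms(2)]
    by (intro exI[of _ collapse] exI[of _ "(0, 0)"] exI[of _ "(1, 0)"]) (simp add: collapse_def)
  moreover have "?P2 \<Longrightarrow> ?P3"
    using collapsing_endomorphism_imp_finite_distance_degree[OF assms(3)] by blast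
  moreover have "?P3 \<Longrightarrow> ?P1"
    using nonpositive_reduced_dnf_imp_infinite_nontrivial[OF assms(3)] by blast
  ultimately show ?thesis
    by blast
qed

end
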